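(* Let $A,K$ be real $n\times n$ matrices, $\alpha>0$, and $F_{A,K,\alpha}(u)=|Ku|^\alpha Au$ for $u\in\mathbb R^n$. (i) If $K$ is invertible and $F_{A,K,\alpha}$ is monotone, then $u^TAu\ge0$ for all $u\in\mathbb R^n$. (ii) If $F_{A,K,\alpha}$ is $\beta$-monotone for some $\beta>0$, then $A$ and $K$ are invertible, $\beta=\alpha+2$, and there is $C>0$ with $u^TAu\ge C|u|^2$ for all $u\in\mathbb R^n$.
   Context: $|\cdot|$ is the Euclidean norm. A map $F:\mathbb R^n\to\mathbb R^n$ is monotone if $(F(u)-F(v))\cdot(u-v)\ge0$ for all $u,v$; for $\beta>0$ it is $\beta$-monotone if there is $C>0$ with $(F(u)-F(v))\cdot(u-v)\ge C|u-v|^\beta$ for all $u,v$. *)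

theory Defs
  imports "HOL-Analysis.Analysis"
begin

definition monotone_map :: "(real^'n \<Rightarrow> real^'n) \<Rightarrow> bool" where
  "monotone_map F \<longleftrightarrow> (\<forall>u v. (F u - F v) \<bullet> (u - v) \<ge> 0)"

definition beta_monotone :: "real \<Rightarrow> (real^'n \<Rightarrow> real^'n) \<Rightarrow> bool" where
  "beta_monotone \<beta> F \<longleftrightarrow>
     (\<exists>C>0. \<forall>u v. (F u - F v) \<bullet> (u - v) \<ge> C * norm (u - v) powr \<beta>)"

definition F_AK :: "real^'n^'n \<Rightarrow> real^'n^'n \<Rightarrow> real \<Rightarrow> real^'n \<Rightarrow> real^'n" where
  "F_AK A K \<alpha> u = (norm (K *v u) powr \<alpha>) *\<^sub>R (A *v u)"

end

theory Submission
  imports Defs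
begin

text \<open>Testing monotonicity against the base point 0 gives the energy
  \<open>|K u|\<^sup>\<alpha> u\<^sup>T A u\<close>. For (i), invertibility of K makes the first factor positive, so the
  quadratic form is nonnegative. For (ii), \<beta>-monotonicity bounds the energy below by
  \<open>C |u|\<^sup>\<beta>\<close>; this forces \<open>Ku \<noteq> 0\<close> and \<open>u\<^sup>T A u > 0\<close> for \<open>u \<noteq> 0\<close>, hence invertibility
  of K and A. The energy is positively homogeneous of degree \<open>\<alpha> + 2\<close>, and a lower
  bound of degree \<beta> along a ray can only hold for \<open>\<beta> = \<alpha> + 2\<close>. Finally
  \<open>|K u| \<le> B |u|\<close> turns the lower bound into coercivity of the quadratic form.\<close>

lemma invertible_if_kernel_trivial:
  fixes A :: "real^'n^'n"
  assumes "\<And>x. x \<noteq> 0 \<Longrightarrow> A *v x \<noteq> 0"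
  shows "invertible A"
  using assms unfolding invertible_left_inverse matrix_left_invertible_ker by blast

lemma powr_lower_bound_imp_exponent_eq:
  fixes C M \<beta> \<gamma> :: real
  assumes "C > 0" "M > 0" and bound: "\<And>t. t > 0 \<Longrightarrow> C * t powr \<beta> \<le> M * t powr \<gamma>"
  shows "\<beta> = \<gamma>"
proof (rule ccontr)
  assume "\<beta> \<noteq> \<gamma>"
  define t where "t = (C / (2 * M)) powr (1 / (\<gamma> - \<beta>))"
  have "t > 0" using assms by (simp add: t_def)
  have "t powr (\<gamma> - \<beta>) = C / (2 * M)"
    using assms \<open>\<beta> \<noteq> \<gamma>\<close> by (simp add: t_def powr_powr)
  then have "M * t powr \<gamma> = C / 2 * t powr \<beta>"
    using \<open>M > 0\<close> \<open>t > 0\<close> by (simp add: powr_diff field_simps)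
  with bound[OF \<open>t > 0\<close>] have "C * t powr \<beta> \<le> C / 2 * t powr \<beta>" by simp
  then show False using \<open>C > 0\<close> \<open>t > 0\<close> by simp
qed

lemma inner_F_AK_diff_zero:
  "(F_AK A K \<alpha> u - F_AK A K \<alpha> 0) \<bullet> (u - 0) = norm (K *v u) powr \<alpha> * (u \<bullet> (A *v u))"
  by (simp add: F_AK_def inner_commute)

lemma F_AK_energy_scaleR:
  fixes A K :: "real^'n^'n"
  assumes "t > 0"
  shows "norm (K *v (t *\<^sub>R u)) powr \<alpha> * ((t *\<^sub>R u) \<bullet> (A *v (t *\<^sub>R u)))
       = t powr (\<alpha> + 2) * (norm (K *v u) powr \<alpha> * (u \<bullet> (A *v u)))"
  using assms
  by (simp add: matrix_vector_mult_scaleR powr_mult powr_add power2_eq_square powr_numeral)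

lemma monotone_F_AK_imp_nonneg:
  fixes A K :: "real^'n^'n"
  assumes "invertible K" "monotone_map (F_AK A K \<alpha>)"
  shows "u \<bullet> (A *v u) \<ge> 0"
proof (cases "u = 0")
  case False
  then have "K *v u \<noteq> 0"
    using \<open>invertible K\<close> unfolding invertible_left_inverse matrix_left_invertible_ker by blast
  then have "norm (K *v u) powr \<alpha> > 0" by simp
  moreover have "norm (K *v u) powr \<alpha> * (u \<bullet> (A *v u)) \<ge> 0"
    using \<open>monotone_map _\<close> unfolding monotone_map_def by (metis inner_F_AK_diff_zero)
  ultimately show ?thesis by (simp add: zero_le_mult_iff)
qed simp

lemma beta_monotone_F_AK_energy_lower_bound:
  assumes "beta_monotone \<beta> (F_AK A K \<alpha>)"
  obtains C where "C > 0" "\<And>u. C * norm u powr \<beta> \<le> norm (K *v u) powr \<alpha> * (u \<bullet> (A *v u))"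
proof -
  obtain C where "C > 0"
    and mono: "\<And>u v. C * norm (u - v) powr \<beta> \<le> (F_AK A K \<alpha> u - F_AK A K \<alpha> v) \<bullet> (u - v)"
    using assms unfolding beta_monotone_def by blast
  show thesis
    by (rule that[OF \<open>C > 0\<close>]) (metis mono[of _ 0] inner_F_AK_diff_zero diff_zero)
qed

context
  fixes A K :: "real^'n^'n" and \<alpha> \<beta> C :: real
  assumes C_pos: "C > 0"
    and energy_bound: "\<And>u. C * norm u powr \<beta> \<le> norm (K *v u) powr \<alpha> * (u \<bullet> (A *v u))"
begin

lemma energy_bound_imp_pos:
  assumes "u \<noteq> 0"
  shows "K *v u \<noteq> 0" and "u \<bullet> (A *v u) > 0"
proof -
  have "0 < C * norm u powr \<beta>" using C_pos assms by simp
  also note energy_bound[of u]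
  finally have "0 < norm (K *v u) powr \<alpha> * (u \<bullet> (A *v u))" .
  moreover have "norm (K *v u) powr \<alpha> \<ge> 0" by simp
  ultimately have "norm (K *v u) powr \<alpha> > 0 \<and> u \<bullet> (A *v u) > 0"
    by (simp add: zero_less_mult_iff)
  then show "K *v u \<noteq> 0" and "u \<bullet> (A *v u) > 0" by auto
qed

lemma energy_bound_imp_invertible: "invertible K" "invertible A"
  using energy_bound_imp_pos by (force intro: invertible_if_kernel_trivial)+

lemma energy_bound_imp_exponent: "\<beta> = \<alpha> + 2"
proof -
  obtain u :: "real^'n" where "norm u = 1"
    using vector_choose_size[of 1] by auto
  then have "u \<noteq> 0" by auto
  define M where "M = norm (K *v u) powr \<alpha> * (u \<bullet> (A *v u))"
  have "M > 0"
    using energy_bound_imp_pos[OF \<open>u \<noteq> 0\<close>] by (simp add: M_def)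
  moreover have "C * t powr \<beta> \<le> M * t powr (\<alpha> + 2)" if "t > 0" for t
    using energy_bound[of "t *\<^sub>R u"] F_AK_energy_scaleR[OF that, of K u \<alpha> A] that \<open>norm u = 1\<close>
    by (simp add: M_def mult.commute)
  ultimately show ?thesis
    by (intro powr_lower_bound_imp_exponent_eq[OF C_pos])
qed

lemma energy_bound_imp_coercive:
  assumes "\<alpha> \<ge> 0"
  obtains C' where "C' > 0" "\<And>u. C' * (norm u)\<^sup>2 \<le> u \<bullet> (A *v u)"
proof -
  obtain B where "B > 0" and K_bound: "\<And>x. norm (K *v x) \<le> B * norm x"
    using linear_bounded_pos[OF matrix_vector_mul_linear] by blast
  have "C / B powr \<alpha> * (norm u)\<^sup>2 \<le> u \<bullet> (A *v u)" for u
  proof (cases "u = 0")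
    case False
    then have "norm u > 0" by simp
    have "norm (K *v u) powr \<alpha> \<le> (B * norm u) powr \<alpha>"
      using K_bound[of u] assms by (intro powr_mono2) auto
    then have K_powr: "norm (K *v u) powr \<alpha> \<le> B powr \<alpha> * norm u powr \<alpha>"
      using \<open>B > 0\<close> \<open>norm u > 0\<close> by (simp add: powr_mult)
    have "norm u powr \<alpha> * (C * (norm u)\<^sup>2) = C * norm u powr \<beta>"
      using \<open>norm u > 0\<close> by (simp add: energy_bound_imp_exponent powr_add powr_numeral mult_ac)
    also have "\<dots> \<le> norm (K *v u) powr \<alpha> * (u \<bullet> (A *v u))"
      by (rule energy_bound)
    also have "\<dots> \<le> norm u powr \<alpha> * (B powr \<alpha> * (u \<bullet> (A *v u)))"
      using K_powr energy_bound_imp_pos(2)[OF False]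
      by (simp add: mult_right_mono mult.assoc[symmetric] mult.commute[of "B powr \<alpha>"])
    finally have "C * (norm u)\<^sup>2 \<le> B powr \<alpha> * (u \<bullet> (A *v u))"
      using \<open>norm u > 0\<close> by (simp add: mult_le_cancel_left_pos)
    then show ?thesis using \<open>B > 0\<close> by (simp add: field_simps)
  qed simp
  moreover have "C / B powr \<alpha> > 0" using C_pos \<open>B > 0\<close> by simp
  ultimately show thesis using that by blast
qed

end

theorem mainTheorem9:
  fixes A K :: "real^'n^'n" and \<alpha> :: real
  assumes "\<alpha> > 0"
  shows "(invertible K \<and> monotone_map (F_AK A K \<alpha>) \<longrightarrow> (\<forall>u. u \<bullet> (A *v u) \<ge> 0))
       \<and> (\<forall>\<beta>>0. beta_monotone \<beta> (F_AK A K \<alpha>) \<longrightarrow>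
            invertible A \<and> invertible K \<and> \<beta> = \<alpha> + 2 \<and>
            (\<exists>C>0. \<forall>u. u \<bullet> (A *v u) \<ge> C * (norm u)\<^sup>2))"
proof (intro conjI impI allI)
  show "u \<bullet> (A *v u) \<ge> 0" if "invertible K \<and> monotone_map (F_AK A K \<alpha>)" for u
    using that monotone_F_AK_imp_nonneg by blast
next
  fix \<beta> :: real
  assume "beta_monotone \<beta> (F_AK A K \<alpha>)"
  then obtain C where C: "C > 0"
    "\<And>u. C * norm u powr \<beta> \<le> norm (K *v u) powr \<alpha> * (u \<bullet> (A *v u))"
    using beta_monotone_F_AK_energy_lower_bound by blast
  show "invertible A" "invertible K" using energy_bound_imp_invertible[OF C] by auto
  show "\<beta> = \<alpha> + 2" using energy_bound_imp_exponent[OF C] .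
  obtain C' where "C' > 0" "\<And>u. C' * (norm u)\<^sup>2 \<le> u \<bullet> (A *v u)"
    using energy_bound_imp_coercive[OF C] \<open>\<alpha> > 0\<close> by auto
  then show "\<exists>C>0. \<forall>u. u \<bullet> (A *v u) \<ge> C * (norm u)\<^sup>2" by auto
qed

end
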